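(* For every $\sigma\in\Sigma$ there exist $B\in\mathbb{N}$ and a deck $\beta_1,\ldots,\beta_B\in\mathscr{B}$ such that $T^*_i(\beta_1,\ldots,\beta_B)\ge1$ for all $i\in\mathcal{N}$ and $T^\sigma(\beta_1,\ldots,\beta_B)=T^*(\beta_1,\ldots,\beta_B)$.
   Context: A ballot style consists of contests $\mathcal{C}=\{1,\ldots,C\}$, candidates $\mathcal{N}=\{1,\ldots,N\}$ partitioned into nonempty sets $\mathcal{N}_c$ ($c\in\mathcal{C}$), and positive integers $v_c$. A filled-out ballot is a subset $\beta\subseteq\mathcal{N}$; $\mathscr{B}=\{\beta\subseteq\mathcal{N}: |\mathcal{N}_c\cap\beta|\le v_c\ \forall c\}$. For $i\in\mathcal{N}_c$: $T^*_i(\beta_1,\ldots,\beta_B)=\sum_{b=1}^B\mathbb{I}\{i\in\beta_b\text{ and }|\mathcal{N}_c\cap\beta_b|\le v_c\}$, and for a bijection $\sigma$ of $\mathcal{N}$, $T^\sigma_i(\beta_1,\ldots,\beta_B)=\sum_{b=1}^B\mathbb{I}\{\sigma(i)\in\beta_b\text{ and }|\{\sigma(j)\in\beta_b: j\in\mathcal{N}_c\}|\le v_c\}$. $\Sigma$ is the set of non-identity bijections $\mathcal{N}\to\mathcal{N}$. *)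

theory Defs
  imports Main
begin

text \<open>Ballot style: contests {1..C}, candidates {1..N}, the candidate set of
contest c is Nc c, vote limit v c. A ballot is a set of candidates.\<close>

definition ballot_style :: "nat \<Rightarrow> nat \<Rightarrow> (nat \<Rightarrow> nat set) \<Rightarrow> (nat \<Rightarrow> nat) \<Rightarrow> bool" where
  "ballot_style C N Nc v \<longleftrightarrow>
     (\<forall>c\<in>{1..C}. Nc c \<noteq> {} \<and> 0 < v c) \<and>
     (\<forall>c\<in>{1..C}. \<forall>d\<in>{1..C}. c \<noteq> d \<longrightarrow> Nc c \<inter> Nc d = {}) \<and>
     (\<Union>c\<in>{1..C}. Nc c) = {1..N}"

definition valid_ballots :: "nat \<Rightarrow> nat \<Rightarrow> (nat \<Rightarrow> nat set) \<Rightarrow> (nat \<Rightarrow> nat) \<Rightarrow> nat set set" where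
  "valid_ballots C N Nc v = {\<beta>. \<beta> \<subseteq> {1..N} \<and> (\<forall>c\<in>{1..C}. card (Nc c \<inter> \<beta>) \<le> v c)}"

text \<open>T*_i of a deck (list of ballots); i belongs to the unique contest c with i in Nc c.\<close>
definition Tstar :: "nat \<Rightarrow> (nat \<Rightarrow> nat set) \<Rightarrow> (nat \<Rightarrow> nat) \<Rightarrow> nat set list \<Rightarrow> nat \<Rightarrow> nat" where
  "Tstar C Nc v bs i =
     length (filter (\<lambda>\<beta>. i \<in> \<beta> \<and> (\<forall>c\<in>{1..C}. i \<in> Nc c \<longrightarrow> card (Nc c \<inter> \<beta>) \<le> v c)) bs)"

definition Tsigma :: "nat \<Rightarrow> (nat \<Rightarrow> nat set) \<Rightarrow> (nat \<Rightarrow> nat) \<Rightarrow> (nat \<Rightarrow> nat) \<Rightarrow> nat set list \<Rightarrow> nat \<Rightarrow> nat" where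
  "Tsigma C Nc v \<sigma> bs i =
     length (filter (\<lambda>\<beta>. \<sigma> i \<in> \<beta> \<and>
        (\<forall>c\<in>{1..C}. i \<in> Nc c \<longrightarrow> card {\<sigma> j | j. j \<in> Nc c \<and> \<sigma> j \<in> \<beta>} \<le> v c)) bs)"

end

theory Submission
  imports Defs
begin

text \<open>Take the deck with one ballot per candidate, each marking only that candidate. A singleton
  ballot never overvotes because every vote limit is positive, and it is counted for candidate i by
  both T* and T^\<sigma> exactly when it is the ballot of i, resp. of \<sigma> i. So both tallies are
  identically 1.\<close>

definition singleton_deck :: "nat \<Rightarrow> nat set list" where
  "singleton_deck N = map (\<lambda>k. {k}) [1..<N+1]"

lemma length_filter_map_singleton:
  assumes "distinct xs" "x \<in> set xs" "P {x}"
  shows "length (filter (\<lambda>\<beta>. x \<in> \<beta> \<and> P \<beta>) (map (\<lambda>k. {k}) xs)) = 1"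
proof -
  have "filter (\<lambda>k. x \<in> {k} \<and> P {k}) xs = filter (\<lambda>k. k = x) xs"
    using assms(3) by (intro filter_cong) auto
  also have "\<dots> = [x]"
    using assms(1,2) by (induction xs) (auto simp: filter_empty_conv)
  finally show ?thesis by (simp add: filter_map comp_def)
qed

lemma ballot_style_vote_limit_pos:
  "ballot_style C N Nc v \<Longrightarrow> c \<in> {1..C} \<Longrightarrow> 0 < v c"
  unfolding ballot_style_def by blast

lemma card_le_vote_limit_if_subset_singleton:
  assumes "ballot_style C N Nc v" "c \<in> {1..C}" "A \<subseteq> {k}"
  shows "card A \<le> v c"
proof -
  have "card A \<le> 1" using assms(3) card_mono[of "{k}" A] by simp
  with ballot_style_vote_limit_pos[OF assms(1,2)] show ?thesis by linarith
qed

lemma singleton_deck_valid: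
  assumes "ballot_style C N Nc v"
  shows "set (singleton_deck N) \<subseteq> valid_ballots C N Nc v"
  by (auto simp: singleton_deck_def valid_ballots_def
      intro: card_le_vote_limit_if_subset_singleton[OF assms])

lemma Tstar_singleton_deck:
  assumes "ballot_style C N Nc v" "i \<in> {1..N}"
  shows "Tstar C Nc v (singleton_deck N) i = 1"
  unfolding Tstar_def singleton_deck_def
  using assms by (intro length_filter_map_singleton)
    (auto simp: Suc_le_eq intro: ballot_style_vote_limit_pos)

lemma Tsigma_singleton_deck:
  assumes "ballot_style C N Nc v" "\<sigma> i \<in> {1..N}"
  shows "Tsigma C Nc v \<sigma> (singleton_deck N) i = 1"
  unfolding Tsigma_def singleton_deck_def
  using assms by (intro length_filter_map_singleton)
    (auto intro: card_le_vote_limit_if_subset_singleton[OF assms(1)])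

theorem proposition6:
  fixes C N :: nat and Nc :: "nat \<Rightarrow> nat set" and v :: "nat \<Rightarrow> nat" and \<sigma> :: "nat \<Rightarrow> nat"
  assumes "ballot_style C N Nc v"
    and "bij_betw \<sigma> {1..N} {1..N}"
    and "\<exists>i\<in>{1..N}. \<sigma> i \<noteq> i"
  shows "\<exists>bs :: nat set list.
           set bs \<subseteq> valid_ballots C N Nc v \<and>
           (\<forall>i\<in>{1..N}. Tstar C Nc v bs i \<ge> 1) \<and>
           (\<forall>i\<in>{1..N}. Tsigma C Nc v \<sigma> bs i = Tstar C Nc v bs i)"
proof (intro exI conjI ballI)
  let ?bs = "singleton_deck N"
  show "set ?bs \<subseteq> valid_ballots C N Nc v"
    using assms(1) by (rule singleton_deck_valid)
  fix i assume i: "i \<in> {1..N}"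
  then show "Tstar C Nc v ?bs i \<ge> 1"
    using Tstar_singleton_deck[OF assms(1)] by simp
  have "\<sigma> i \<in> {1..N}" using bij_betw_apply[OF assms(2) i] .
  then show "Tsigma C Nc v \<sigma> ?bs i = Tstar C Nc v ?bs i"
    using Tsigma_singleton_deck[OF assms(1)] Tstar_singleton_deck[OF assms(1) i] by simp
qed

end
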